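(* Let $(X,d)$ be a complete CAT(0) space and let $(A,B)$ be a pair of nonempty, closed, convex, bounded subsets of $X$ which is proximal. Let $T:A\cup B\to A\cup B$ be a noncyclic relatively nonexpansive mapping. Then $T$ is nonexpansive, i.e., $d(Tx,Ty)\le d(x,y)$ for all $x,y\in A\cup B$.
   Context: A CAT(0) space is a geodesic space in which every geodesic triangle satisfies $d(x,y)\le d_{\mathbb{E}^2}(\bar x,\bar y)$ for all points $x,y$ of the triangle and their comparison points in a Euclidean comparison triangle with the same side lengths. $\operatorname{dist}(A,B)=\inf\{d(x,y):x\in A,y\in B\}$. The pair $(A,B)$ is proximal if for every $(a,b)\in A\times B$ there is $(a',b')\in A\times B$ with $d(a,b')=d(a',b)=\operatorname{dist}(A,B)$. $T$ is relatively nonexpansive if $d(Tx,Ty)\le d(x,y)$ for all $x\in A$, $y\in B$, and noncyclic if $T(A)\subseteq A$, $T(B)\subseteq B$. *)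

theory Defs
  imports "HOL-Analysis.Analysis"
begin

definition geodesic_seg :: "(real \<Rightarrow> 'a::metric_space) \<Rightarrow> 'a \<Rightarrow> 'a \<Rightarrow> bool" where
  "geodesic_seg g x y \<longleftrightarrow> g 0 = x \<and> g 1 = y \<and>
     (\<forall>s\<in>{0..1}. \<forall>t\<in>{0..1}. dist (g s) (g t) = \<bar>s - t\<bar> * dist x y)"

definition geodesic_space :: "'a::metric_space itself \<Rightarrow> bool" where
  "geodesic_space _ \<longleftrightarrow> (\<forall>x y::'a. \<exists>g. geodesic_seg g x y)"

definition cat0_sides ::
  "(real \<Rightarrow> 'a::metric_space) \<Rightarrow> real^2 \<Rightarrow> real^2 \<Rightarrow> (real \<Rightarrow> 'a) \<Rightarrow> real^2 \<Rightarrow> real^2 \<Rightarrow> bool" where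
  "cat0_sides g a b h c e \<longleftrightarrow>
     (\<forall>s\<in>{0..1}. \<forall>t\<in>{0..1}.
        dist (g s) (h t) \<le> dist ((1 - s) *\<^sub>R a + s *\<^sub>R b) ((1 - t) *\<^sub>R c + t *\<^sub>R e))"

definition CAT0_space :: "'a::metric_space itself \<Rightarrow> bool" where
  "CAT0_space TYPE('a) \<longleftrightarrow> geodesic_space TYPE('a) \<and>
     (\<forall>(x::'a) y z g1 g2 g3 (xb::real^2) yb zb.
        geodesic_seg g1 x y \<and> geodesic_seg g2 y z \<and> geodesic_seg g3 z x \<and>
        dist xb yb = dist x y \<and> dist yb zb = dist y z \<and> dist zb xb = dist z x \<longrightarrow>
        (\<forall>(g, a, b)\<in>{(g1, xb, yb), (g2, yb, zb), (g3, zb, xb)}.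
         \<forall>(h, c, e)\<in>{(g1, xb, yb), (g2, yb, zb), (g3, zb, xb)}.
           cat0_sides g a b h c e))"

definition geod_convex :: "'a::metric_space set \<Rightarrow> bool" where
  "geod_convex C \<longleftrightarrow> (\<forall>x\<in>C. \<forall>y\<in>C. \<forall>g. geodesic_seg g x y \<longrightarrow> g ` {0..1} \<subseteq> C)"

definition proximal_pair :: "'a::metric_space set \<Rightarrow> 'a set \<Rightarrow> bool" where
  "proximal_pair A B \<longleftrightarrow> (\<forall>a\<in>A. \<forall>b\<in>B. \<exists>a'\<in>A. \<exists>b'\<in>B.
      dist a b' = setdist A B \<and> dist a' b = setdist A B)"

definition noncyclic :: "('a \<Rightarrow> 'a) \<Rightarrow> 'a set \<Rightarrow> 'a set \<Rightarrow> bool" where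
  "noncyclic T A B \<longleftrightarrow> T ` A \<subseteq> A \<and> T ` B \<subseteq> B"

definition rel_nonexpansive :: "('a::metric_space \<Rightarrow> 'a) \<Rightarrow> 'a set \<Rightarrow> 'a set \<Rightarrow> bool" where
  "rel_nonexpansive T A B \<longleftrightarrow> (\<forall>x\<in>A. \<forall>y\<in>B. dist (T x) (T y) \<le> dist x y)"

end

theory Submission
  imports Defs
begin

text \<open>
  Both sides of the inequality are trivial unless x and y lie in the same set, say A.
  Choose x', y' \<in> B at distance D = dist(A,B) from x and y. In a CAT(0) space a
  nearest point q of a convex set to w satisfies d(p,q)^2 + d(q,w)^2 \<le> d(p,w)^2 for
  every p in the set, and any four points satisfy
  d(a,c)^2 \<le> d(a,b)^2 + d(a,d)^2 + d(c,b)^2 + d(c,d)^2 - d(b,d)^2.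
  Since T y stays at distance D from T y', these give
  d(Tx,Ty)^2 + D^2 \<le> d(Tx,Ty')^2 \<le> d(x,y')^2 \<le> d(x,y)^2 + D^2.
\<close>

lemma norm_axis_combination_sq:
  fixes u v :: real
  shows "norm (u *\<^sub>R (axis 1 1 :: real^2) + v *\<^sub>R axis 2 1) ^ 2 = u^2 + v^2"
proof -
  have "(1::2) \<noteq> 2" by simp
  then show ?thesis
    unfolding power2_norm_eq_inner
    by (simp add: inner_add_left inner_add_right inner_axis_axis power2_eq_square)
qed

lemma triangle_foot_sq_le:
  fixes a b c :: real
  assumes "0 \<le> a" "0 \<le> b" "0 < c" "a \<le> b + c" "b \<le> a + c" "c \<le> a + b"
  shows "((b^2 + c^2 - a^2) / (2*c))^2 \<le> b^2"
proof -
  have "\<bar>b - c\<bar>^2 \<le> a^2" "a^2 \<le> (b + c)^2"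
    using assms by (intro power_mono; auto)+
  then have "\<bar>b^2 + c^2 - a^2\<bar> \<le> 2*b*c"
    by (simp add: power2_eq_square algebra_simps abs_le_iff)
  then have "\<bar>(b^2 + c^2 - a^2) / (2*c)\<bar> \<le> b"
    using assms(3) by (simp add: abs_divide divide_le_eq mult.commute mult.left_commute)
  then show ?thesis
    using assms(2) by (metis abs_le_square_iff abs_of_nonneg)
qed

text \<open>The comparison triangle: x = 0, y = (c,0), z = (p,q) with p, q from the law of cosines.\<close>
lemma euclidean_triangle_exists:
  fixes a b c :: real
  assumes "0 \<le> a" "0 \<le> b" "0 \<le> c" "a \<le> b + c" "b \<le> a + c" "c \<le> a + b"
  shows "\<exists>x y z :: real^2. dist x y = c \<and> dist y z = a \<and> dist z x = b"
proof -
  define e1 :: "real^2" where "e1 = axis 1 1"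
  define e2 :: "real^2" where "e2 = axis 2 1"
  define p where "p = (b^2 + c^2 - a^2) / (2*c)"
  define q where "q = sqrt (b^2 - p^2)"
  have "p^2 \<le> b^2"
    using triangle_foot_sq_le[OF assms(1,2) _ assms(4-6)] assms(3)
    by (cases "c = 0") (auto simp: p_def)
  then have q_sq: "q^2 = b^2 - p^2" by (simp add: q_def)
  define z where "z = p *\<^sub>R e1 + q *\<^sub>R e2"
  have "dist 0 (c *\<^sub>R e1) = c"
    using norm_axis_combination_sq[of c 0] assms(3) by (simp add: e1_def dist_norm)
  moreover have "dist (c *\<^sub>R e1) z ^ 2 = a ^ 2"
  proof -
    have "dist (c *\<^sub>R e1) z ^ 2 = (c - p)^2 + (0 - q)^2"
      unfolding dist_norm z_def e1_def e2_def
      by (subst norm_axis_combination_sq[symmetric]) (simp add: algebra_simps)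
    also have "\<dots> = a^2"
    proof (cases "c = 0")
      case True
      then have "a = b" using assms by simp
      then show ?thesis using True q_sq by (simp add: p_def power2_eq_square)
    next
      case False
      then show ?thesis using q_sq by (simp add: p_def power2_eq_square field_simps)
    qed
    finally show ?thesis .
  qed
  moreover have "dist z 0 ^ 2 = b ^ 2"
    using q_sq unfolding dist_norm z_def e1_def e2_def by (simp add: norm_axis_combination_sq)
  ultimately show ?thesis
    using assms by (metis power2_eq_iff_nonneg zero_le_dist)
qed

lemma dist_convex_combination_sq:
  fixes x y z :: "'b::real_inner"
  shows "dist ((1 - t) *\<^sub>R y + t *\<^sub>R z) x ^ 2
     = (1 - t) * dist y x ^ 2 + t * dist z x ^ 2 - t * (1 - t) * dist y z ^ 2"
proof -
  have shift: "(1 - t) *\<^sub>R y + t *\<^sub>R z - x = (1 - t) *\<^sub>R (y - x) + t *\<^sub>R (z - x)"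
    by (simp add: algebra_simps)
  have "y - z = (y - x) - (z - x)" by simp
  then show ?thesis
    unfolding dist_norm shift
    by (simp add: power2_norm_eq_inner inner_add_left inner_add_right inner_diff_left
        inner_diff_right inner_commute) (simp add: algebra_simps power2_eq_square)
qed

lemma CAT0_geodesic_space:
  "CAT0_space TYPE('a::metric_space) \<Longrightarrow> \<exists>g. geodesic_seg g (x::'a) y"
  unfolding CAT0_space_def geodesic_space_def by blast

text \<open>The CN inequality of Bruhat and Tits, from the comparison triangle of x, y, z.\<close>
lemma CAT0_CN_inequality:
  assumes cat: "CAT0_space TYPE('a::metric_space)"
    and g: "geodesic_seg g y z" and t: "t \<in> {0..1}"
  shows "dist (x::'a) (g t) ^ 2
    \<le> (1 - t) * dist x y ^ 2 + t * dist x z ^ 2 - t * (1 - t) * dist y z ^ 2"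
proof -
  obtain g1 where g1: "geodesic_seg g1 x y" using CAT0_geodesic_space[OF cat] by blast
  obtain g3 where g3: "geodesic_seg g3 z x" using CAT0_geodesic_space[OF cat] by blast
  obtain xb yb zb :: "real^2"
    where d: "dist xb yb = dist x y" "dist yb zb = dist y z" "dist zb xb = dist z x"
    using euclidean_triangle_exists[of "dist y z" "dist z x" "dist x y"]
    by (metis dist_commute dist_triangle zero_le_dist add.commute)
  have "cat0_sides g yb zb g1 xb yb"
    using cat g g1 g3 d unfolding CAT0_space_def by fastforce
  then have "dist (g t) (g1 0) \<le> dist ((1 - t) *\<^sub>R yb + t *\<^sub>R zb) ((1 - 0) *\<^sub>R xb + 0 *\<^sub>R yb)"
    unfolding cat0_sides_def using t by (metis atLeastAtMost_iff order_refl zero_le_one)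
  then have "dist x (g t) \<le> dist ((1 - t) *\<^sub>R yb + t *\<^sub>R zb) xb"
    using g1 by (simp add: geodesic_seg_def dist_commute)
  then have "dist x (g t) ^ 2 \<le> dist ((1 - t) *\<^sub>R yb + t *\<^sub>R zb) xb ^ 2"
    by (intro power_mono) auto
  also have "\<dots> = (1 - t) * dist x y ^ 2 + t * dist x z ^ 2 - t * (1 - t) * dist y z ^ 2"
    unfolding dist_convex_combination_sq using d by (simp add: dist_commute)
  finally show ?thesis .
qed

text \<open>Compare w with points g t of the geodesic from q to p and let t \<rightarrow> 0.\<close>
lemma CAT0_nearest_point_sq_le:
  assumes cat: "CAT0_space TYPE('a::metric_space)"
    and A: "geod_convex A" "p \<in> A" "q \<in> A"
    and nearest: "\<forall>a\<in>A. dist w q \<le> dist w (a::'a)"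
  shows "dist p q ^ 2 + dist q w ^ 2 \<le> dist p w ^ 2"
proof -
  obtain g where g: "geodesic_seg g q p" using CAT0_geodesic_space[OF cat] by blast
  have "g ` {0..1} \<subseteq> A" using A g unfolding geod_convex_def by blast
  have bound: "dist p q ^ 2 + dist q w ^ 2 \<le> dist p w ^ 2 + t * dist p q ^ 2"
    if t: "0 < t" "t < 1" for t
  proof -
    have "dist w q \<le> dist w (g t)"
      using nearest \<open>g ` {0..1} \<subseteq> A\<close> t by (simp add: image_subset_iff)
    then have "dist w q ^ 2 \<le> dist w (g t) ^ 2" by (intro power_mono) auto
    also have "\<dots> \<le> (1 - t) * dist w q ^ 2 + t * dist w p ^ 2 - t * (1 - t) * dist q p ^ 2"
      using CAT0_CN_inequality[OF cat g] t by auto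
    finally have "t * dist w q ^ 2 \<le> t * (dist w p ^ 2 - (1 - t) * dist q p ^ 2)"
      by (simp add: algebra_simps)
    then have "dist w q ^ 2 \<le> dist w p ^ 2 - (1 - t) * dist q p ^ 2" using t by simp
    then show ?thesis by (simp add: dist_commute algebra_simps)
  qed
  have "((\<lambda>t. dist p w ^ 2 + t * dist p q ^ 2) \<longlongrightarrow> dist p w ^ 2 + 0 * dist p q ^ 2) (at_right 0)"
    by (intro tendsto_intros)
  moreover have "\<forall>\<^sub>F t in at_right 0. dist p q ^ 2 + dist q w ^ 2 \<le> dist p w ^ 2 + t * dist p q ^ 2"
    unfolding eventually_at_right_field using bound by (intro exI[of _ 1]) auto
  ultimately show ?thesis
    by (simp add: tendsto_lowerbound)
qed

text \<open>Apply the CN inequality at the midpoint m of b and d, and use (r + s)^2 \<le> 2r^2 + 2s^2.\<close>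
lemma CAT0_four_point_inequality:
  assumes cat: "CAT0_space TYPE('a::metric_space)"
  shows "dist (a::'a) c ^ 2
    \<le> dist a b ^ 2 + dist a d ^ 2 + dist c b ^ 2 + dist c d ^ 2 - dist b d ^ 2"
proof -
  obtain g where g: "geodesic_seg g b d" using CAT0_geodesic_space[OF cat] by blast
  define m where "m = g (1/2)"
  have CN: "dist x m ^ 2 \<le> dist x b ^ 2 / 2 + dist x d ^ 2 / 2 - dist b d ^ 2 / 4" for x
    using CAT0_CN_inequality[OF cat g, of "1/2" x] by (simp add: m_def)
  have "dist a c ^ 2 \<le> (dist a m + dist c m) ^ 2"
    by (intro power_mono) (auto intro: dist_triangle_le simp: dist_commute)
  also have "\<dots> \<le> 2 * dist a m ^ 2 + 2 * dist c m ^ 2"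
    using zero_le_power2[of "dist a m - dist c m"] by (simp add: power2_eq_square algebra_simps)
  finally show ?thesis using CN[of a] CN[of c] by linarith
qed

lemma proximal_pair_commute: "proximal_pair A B \<Longrightarrow> proximal_pair B A"
  unfolding proximal_pair_def by (metis dist_commute setdist_sym)

lemma noncyclic_commute: "noncyclic T A B \<Longrightarrow> noncyclic T B A"
  unfolding noncyclic_def by blast

lemma rel_nonexpansive_commute: "rel_nonexpansive T A B \<Longrightarrow> rel_nonexpansive T B A"
  unfolding rel_nonexpansive_def by (metis dist_commute)

lemma rel_nonexpansive_nonexpansive_on_left:
  fixes A B :: "'a::metric_space set"
  assumes cat: "CAT0_space TYPE('a)"
    and "B \<noteq> {}"
    and convex: "geod_convex A" "geod_convex B"
    and prox: "proximal_pair A B"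
    and nc: "noncyclic T A B"
    and ne: "rel_nonexpansive T A B"
    and x: "x \<in> A" and y: "y \<in> A"
  shows "dist (T x) (T y) \<le> dist x y"
proof -
  define D where "D = setdist A B"
  have D_le: "D \<le> dist a b" if "a \<in> A" "b \<in> B" for a b
    using that by (simp add: D_def setdist_le_dist)
  have "\<exists>b\<in>B. dist a b = D" if "a \<in> A" for a
    using prox \<open>B \<noteq> {}\<close> that unfolding proximal_pair_def D_def by blast
  then obtain x' y' where x': "x' \<in> B" "dist x x' = D" and y': "y' \<in> B" "dist y y' = D"
    using x y by meson
  have T_in: "T x \<in> A" "T y \<in> A" "T y' \<in> B"
    using nc x y y' unfolding noncyclic_def by auto
  have "dist (T y) (T y') \<le> D"
    using ne y y' unfolding rel_nonexpansive_def by fastforce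
  then have "dist (T y') (T y) = D"
    using D_le T_in by (simp add: dist_commute antisym)
  then have Ty_nearest: "\<forall>a\<in>A. dist (T y') (T y) \<le> dist (T y') a"
    using D_le T_in by (simp add: dist_commute)
  have TxTy: "dist (T x) (T y) ^ 2 + D ^ 2 \<le> dist (T x) (T y') ^ 2"
    using CAT0_nearest_point_sq_le[OF cat convex(1) T_in(1,2) Ty_nearest] \<open>dist (T y') (T y) = D\<close>
    by (simp add: dist_commute)
  have y'_nearest: "\<forall>b\<in>B. dist y y' \<le> dist y b"
    using D_le y y' by simp
  have "dist x' y' ^ 2 + D ^ 2 \<le> dist x' y ^ 2"
    using CAT0_nearest_point_sq_le[OF cat convex(2) x'(1) y'(1) y'_nearest] y' by (simp add: dist_commute)
  then have xy': "dist x y' ^ 2 \<le> dist x y ^ 2 + D ^ 2"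
    using CAT0_four_point_inequality[OF cat, of x y' y x'] x' y' by (simp add: dist_commute)
  have "dist (T x) (T y') \<le> dist x y'"
    using ne x y' unfolding rel_nonexpansive_def by blast
  then have "dist (T x) (T y') ^ 2 \<le> dist x y' ^ 2" by (intro power_mono) auto
  then have "dist (T x) (T y) ^ 2 \<le> dist x y ^ 2" using TxTy xy' by linarith
  then show ?thesis by (simp add: power2_le_iff_abs_le)
qed

theorem mainTheorem10:
  fixes A B :: "'a::complete_space set" and T :: "'a \<Rightarrow> 'a"
  assumes "CAT0_space TYPE('a)"
    and "A \<noteq> {}" "B \<noteq> {}"
    and "closed A" "closed B"
    and "geod_convex A" "geod_convex B"
    and "bounded A" "bounded B"
    and "proximal_pair A B"
    and "noncyclic T A B"
    and "rel_nonexpansive T A B"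
  shows "\<forall>x\<in>A \<union> B. \<forall>y\<in>A \<union> B. dist (T x) (T y) \<le> dist x y"
proof (intro ballI)
  fix x y assume x: "x \<in> A \<union> B" and y: "y \<in> A \<union> B"
  have on_A: "dist (T x) (T y) \<le> dist x y" if "x \<in> A" "y \<in> A"
    using rel_nonexpansive_nonexpansive_on_left[OF assms(1,3,6,7,10-12) that] .
  have on_B: "dist (T x) (T y) \<le> dist x y" if "x \<in> B" "y \<in> B"
    using rel_nonexpansive_nonexpansive_on_left[OF assms(1,2,7,6) proximal_pair_commute
        noncyclic_commute rel_nonexpansive_commute, OF assms(10-12) that] .
  show "dist (T x) (T y) \<le> dist x y"
    using on_A on_B x y assms(12) rel_nonexpansive_commute[OF assms(12)]
    unfolding rel_nonexpansive_def by blast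
qed

end
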